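(* Let $\mathcal{G}$ be a simple temporal clique on $n$ vertices and let $\mathcal{T}^-=(V,E^-_T)$ be obtained by the forward construction (for any choice of the arbitrary choices). Then the number of emitters is at most $n/2$.
   Context: A simple temporal clique is a pair $\mathcal{G}=(G,\lambda)$ where $G=(V,E)$ is the complete graph on a finite set $V$ of $n$ vertices and $\lambda:E\to\mathbb{N}$ assigns to each edge a single integer label such that any two distinct edges sharing an endpoint have different labels; the label of an arc $(x,y)$ is $\lambda(\{x,y\})$. For a vertex $v$, $e^-(v)$ is the edge incident to $v$ with smallest label. Forward construction: let $E^-$ be the set of arcs $(u,v)$ with $\{u,v\}=e^-(v)$, except that if $e^-(u)=e^-(v)=\{u,v\}$ only one of the two arcs $(u,v),(v,u)$ is included (arbitrarily). Initialize $E^-_T:=E^-$. For every vertex $v$ of out-degree at least $2$ in $(V,E^-)$, let $(v,u_1),\dots,(v,u_\ell)$ be its out-arcs in $E^-$, where $(v,u_\ell)$ has the largest label; for each $i<\ell$, if $u_i$ has out-degree $0$ in $(V,E^-)$, replace $(v,u_i)$ by $(u_i,v)$ in $E^-_T$, and otherwise remove $(v,u_i)$ from $E^-_T$. Set $\mathcal{T}^-=(V,E^-_T)$. An emitter is a vertex of out-degree $0$ in $\mathcal{T}^-$. *)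

theory Defs
  imports Complex_Main
begin

definition simple_temporal_clique :: "'a set \<Rightarrow> ('a set \<Rightarrow> nat) \<Rightarrow> bool" where
  "simple_temporal_clique V lam \<longleftrightarrow> finite V \<and>
     (\<forall>u\<in>V. \<forall>v\<in>V. \<forall>w\<in>V. v \<noteq> u \<and> w \<noteq> u \<and> v \<noteq> w \<longrightarrow> lam {u,v} \<noteq> lam {u,w})"

text \<open>The other endpoint of e^-(v): the neighbour u of v minimising lam {v,u}, so e^-(v) = {v, mnb V lam v}.\<close>
definition mnb :: "'a set \<Rightarrow> ('a set \<Rightarrow> nat) \<Rightarrow> 'a \<Rightarrow> 'a" where
  "mnb V lam v = (ARG_MIN (\<lambda>u. lam {v,u}) u. u \<in> V \<and> u \<noteq> v)"

definition emin :: "'a set \<Rightarrow> ('a set \<Rightarrow> nat) \<Rightarrow> 'a \<Rightarrow> 'a set" where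
  "emin V lam v = {v, mnb V lam v}"

text \<open>Em is a legal choice of E^-: it consists of the arcs (u,v) with {u,v} = e^-(v), except that
  for a pair with e^-(u) = e^-(v) = {u,v} exactly one of (u,v), (v,u) is kept (arbitrary choice).\<close>
definition is_Eminus :: "'a set \<Rightarrow> ('a set \<Rightarrow> nat) \<Rightarrow> ('a \<times> 'a) set \<Rightarrow> bool" where
  "is_Eminus V lam Em \<longleftrightarrow>
     (\<forall>(u,v)\<in>Em. u \<in> V \<and> v \<in> V \<and> u \<noteq> v \<and> {u,v} = emin V lam v) \<and>
     (\<forall>u\<in>V. \<forall>v\<in>V. u \<noteq> v \<and> {u,v} = emin V lam v \<and> \<not> ({u,v} = emin V lam u) \<longrightarrow> (u,v) \<in> Em) \<and>
     (\<forall>u\<in>V. \<forall>v\<in>V. u \<noteq> v \<and> {u,v} = emin V lam v \<and> {u,v} = emin V lam u \<longrightarrow>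
         ((u,v) \<in> Em \<longleftrightarrow> (v,u) \<notin> Em))"

definition outdeg :: "('a \<times> 'a) set \<Rightarrow> 'a \<Rightarrow> nat" where
  "outdeg A v = card {u. (v,u) \<in> A}"

definition topnb :: "('a set \<Rightarrow> nat) \<Rightarrow> ('a \<times> 'a) set \<Rightarrow> 'a \<Rightarrow> 'a" where
  "topnb lam Em v = (ARG_MAX (\<lambda>u. lam {v,u}) u. (v,u) \<in> Em)"

text \<open>E^-_T of the forward construction: for every v of out-degree \<ge> 2 in (V,E^-), each out-arc
  (v,u) other than the largest-labelled one is reversed if u has out-degree 0 in (V,E^-), and
  removed otherwise.\<close>
definition ETminus :: "('a set \<Rightarrow> nat) \<Rightarrow> ('a \<times> 'a) set \<Rightarrow> ('a \<times> 'a) set" where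
  "ETminus lam Em =
     {(v,u). (v,u) \<in> Em \<and> (outdeg Em v < 2 \<or> u = topnb lam Em v)} \<union>
     {(u,v). (v,u) \<in> Em \<and> outdeg Em v \<ge> 2 \<and> u \<noteq> topnb lam Em v \<and> outdeg Em u = 0}"

definition emitters :: "'a set \<Rightarrow> ('a set \<Rightarrow> nat) \<Rightarrow> ('a \<times> 'a) set \<Rightarrow> 'a set" where
  "emitters V lam Em = {v \<in> V. outdeg (ETminus lam Em) v = 0}"

end

theory Submission
  imports Defs
begin

text \<open>Every emitter w has no out-arc in E^- at all (a vertex with out-arcs in E^- keeps at least
  its largest-labelled one in E^-_T), so the edge e^-(w) enters w from its partner mnb w, which is
  therefore not an emitter. Two emitters cannot share this partner v: v would have out-degree at
  least 2, and the arc to an emitter that does not carry v's largest label would be reversed into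
  an out-arc of that emitter. Hence mnb maps the emitters injectively into the non-emitters.\<close>

lemma arg_max_nat_mem_finite:
  fixes f :: "'a \<Rightarrow> nat"
  assumes "finite S" and "x \<in> S"
  shows "arg_max f (\<lambda>u. u \<in> S) \<in> S"
proof -
  have "\<forall>y. y \<in> S \<longrightarrow> f y < Suc (Max (f ` S))"
    using assms(1) by (simp add: le_imp_less_Suc)
  with assms(2) show ?thesis
    using arg_max_natI[of "\<lambda>u. u \<in> S" x f] by blast
qed

lemma mnb_mem:
  assumes "2 \<le> card V" and "v \<in> V"
  shows "mnb V lam v \<in> V" and "mnb V lam v \<noteq> v"
proof -
  have "card (V - {v}) \<noteq> 0"
    using assms by (simp add: card_Diff_singleton_if)
  then obtain u where "u \<in> V" "u \<noteq> v"
    by (metis Diff_empty Diff_iff card.empty insertCI subsetI subset_antisym)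
  then have "mnb V lam v \<in> V \<and> mnb V lam v \<noteq> v"
    unfolding mnb_def by (rule arg_min_natI[of "\<lambda>u. u \<in> V \<and> u \<noteq> v", OF conjI])
  then show "mnb V lam v \<in> V" and "mnb V lam v \<noteq> v" by simp_all
qed

lemma topnb_in_Em:
  assumes "finite {u. (v, u) \<in> Em}" and "(v, w) \<in> Em"
  shows "(v, topnb lam Em v) \<in> Em"
  using arg_max_nat_mem_finite[OF assms(1), of w "\<lambda>u. lam {v, u}"] assms(2)
  unfolding topnb_def by simp

lemma ETminus_out_arc:
  assumes "finite {u. (v, u) \<in> Em}" and "(v, w) \<in> Em"
  shows "\<exists>u. (v, u) \<in> ETminus lam Em"
  using topnb_in_Em[OF assms, of lam] assms(2) unfolding ETminus_def by blast

lemma ETminus_reversed_arc: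
  assumes "(v, u) \<in> Em" and "2 \<le> outdeg Em v" and "u \<noteq> topnb lam Em v" and "outdeg Em u = 0"
  shows "(u, v) \<in> ETminus lam Em"
  using assms unfolding ETminus_def by simp

locale forward_construction =
  fixes V :: "'a set" and lam :: "'a set \<Rightarrow> nat" and Em :: "('a \<times> 'a) set"
  assumes finite_V: "finite V"
    and Eminus: "is_Eminus V lam Em"
begin

lemma Em_subset: "Em \<subseteq> V \<times> V"
  using Eminus unfolding is_Eminus_def by auto

lemma emin_edge_in_Em:
  assumes "u \<in> V" and "v \<in> V" and "u \<noteq> v" and "{u, v} = emin V lam v"
  shows "(u, v) \<in> Em \<or> (v, u) \<in> Em"
  using Eminus assms unfolding is_Eminus_def by blast

lemma finite_out_Em: "finite {u. (v, u) \<in> Em}"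
  using Em_subset by (auto intro: finite_subset[OF _ finite_V])

lemma finite_out_ETminus: "finite {u. (v, u) \<in> ETminus lam Em}"
  using Em_subset unfolding ETminus_def by (auto intro: finite_subset[OF _ finite_V])

lemma emitter_no_ETminus_arc:
  assumes "w \<in> emitters V lam Em"
  shows "(w, u) \<notin> ETminus lam Em"
  using assms finite_out_ETminus[of w] unfolding emitters_def outdeg_def by auto

lemma emitter_no_Em_arc:
  assumes "w \<in> emitters V lam Em"
  shows "(w, u) \<notin> Em"
  using ETminus_out_arc[OF finite_out_Em] emitter_no_ETminus_arc[OF assms] by blast

lemma emitter_outdeg_Em:
  assumes "w \<in> emitters V lam Em"
  shows "outdeg Em w = 0"
  using emitter_no_Em_arc[OF assms] unfolding outdeg_def by simp

context
  assumes card_V: "2 \<le> card V"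
begin

lemma mnb_emitter_arc:
  assumes "w \<in> emitters V lam Em"
  shows "(mnb V lam w, w) \<in> Em"
proof -
  have "w \<in> V"
    using assms unfolding emitters_def by simp
  moreover have "{mnb V lam w, w} = emin V lam w"
    unfolding emin_def by auto
  ultimately show ?thesis
    using emin_edge_in_Em mnb_mem[OF card_V] emitter_no_Em_arc[OF assms] by metis
qed

lemma mnb_emitter_not_emitter:
  assumes "w \<in> emitters V lam Em"
  shows "mnb V lam w \<in> V - emitters V lam Em"
  using mnb_emitter_arc[OF assms] emitter_no_Em_arc Em_subset by blast

lemma inj_on_mnb_emitters: "inj_on (mnb V lam) (emitters V lam Em)"
proof (rule inj_onI, rule ccontr)
  fix w1 w2
  assume w1: "w1 \<in> emitters V lam Em" and w2: "w2 \<in> emitters V lam Em"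
    and same: "mnb V lam w1 = mnb V lam w2" and "w1 \<noteq> w2"
  define v where "v = mnb V lam w1"
  have arcs: "(v, w1) \<in> Em" "(v, w2) \<in> Em"
    using mnb_emitter_arc[OF w1] mnb_emitter_arc[OF w2] same unfolding v_def by simp_all
  then have "card {w1, w2} \<le> outdeg Em v"
    unfolding outdeg_def by (intro card_mono[OF finite_out_Em]) auto
  with \<open>w1 \<noteq> w2\<close> have "2 \<le> outdeg Em v" by simp
  obtain w where w: "w \<in> emitters V lam Em" "(v, w) \<in> Em" "w \<noteq> topnb lam Em v"
    using w1 w2 arcs \<open>w1 \<noteq> w2\<close> by metis
  have "(w, v) \<in> ETminus lam Em"
    using ETminus_reversed_arc[OF w(2) \<open>2 \<le> outdeg Em v\<close> w(3) emitter_outdeg_Em[OF w(1)]] .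
  with emitter_no_ETminus_arc[OF w(1)] show False by blast
qed

lemma card_emitters_le_non_emitters:
  "card (emitters V lam Em) \<le> card (V - emitters V lam Em)"
  using card_inj_on_le[OF inj_on_mnb_emitters _ finite_Diff[OF finite_V]] mnb_emitter_not_emitter
  by blast

end

end

theorem lemma3:
  fixes V :: "'a set" and lam :: "'a set \<Rightarrow> nat" and Em :: "('a \<times> 'a) set"
  assumes "simple_temporal_clique V lam"
    and "card V \<ge> 2"
    and "is_Eminus V lam Em"
  shows "real (card (emitters V lam Em)) \<le> real (card V) / 2"
proof -
  have "finite V"
    using assms(1) unfolding simple_temporal_clique_def by simp
  then interpret forward_construction V lam Em
    using assms(3) by unfold_locales
  have "emitters V lam Em \<subseteq> V"
    unfolding emitters_def by auto
  then have "card V = card (emitters V lam Em) + card (V - emitters V lam Em)"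
    using finite_V by (metis card_Diff_subset card_mono finite_subset le_add_diff_inverse)
  with card_emitters_le_non_emitters[OF assms(2)] show ?thesis
    by simp
qed

end
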